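(* Let $n\ge1$ and let $f:\mathbb{R}^n\to[0,\infty)$ be an isotropic function. Let $x\in\mathbb{R}^n$, $v>0$, and define $g(y)=f(y)\exp\left(-\frac{|x-y|^2}{2v}\right)$ for $y\in\mathbb{R}^n$ (an integrable function). Suppose $X$ is a random vector in $\mathbb{R}^n$ whose density is proportional to $g$. Then (i) $\mathbb{E}|X-x|^2\le n+|x|^2$; (ii) $|\mathbb{E}X-x|\le\sqrt n+|x|$.
   Context: A function $f:\mathbb{R}^n\to[0,\infty)$ is isotropic if it is the probability density of a random vector in $\mathbb{R}^n$ with zero mean and identity covariance matrix. $|\cdot|$ is the Euclidean norm. *)

theory Defs
  imports "HOL-Probability.Probability"
begin

definition isotropic :: "('a::euclidean_space \<Rightarrow> real) \<Rightarrow> bool" where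
  "isotropic f \<longleftrightarrow>
     f \<in> borel_measurable lborel \<and> (\<forall>y. 0 \<le> f y) \<and>
     integrable lborel f \<and> (\<integral>y. f y \<partial>lborel) = 1 \<and>
     integrable lborel (\<lambda>y. f y *\<^sub>R y) \<and> (\<integral>y. f y *\<^sub>R y \<partial>lborel) = 0 \<and>
     integrable lborel (\<lambda>y. f y * (norm y)\<^sup>2) \<and>
     (\<forall>i\<in>Basis. \<forall>j\<in>Basis.
        (\<integral>y. f y * ((y \<bullet> i) * (y \<bullet> j)) \<partial>lborel) = (if i = j then 1 else 0))"

end

theory Submission
  imports Defs
begin

text \<open>Put \<open>t y = |y - x|\<^sup>2\<close>. The Gaussian factor is a decreasing function of \<open>t\<close>, so
under the probability measure with density \<open>f\<close> it is negatively correlated with \<open>t\<close>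
(Chebyshev's integral inequality). Reweighting \<open>f\<close> by it can therefore only lower the mean of
\<open>t\<close>, which under \<open>f\<close> itself equals \<open>n + |x|\<^sup>2\<close> by isotropy. Part (ii) follows from
\<open>|EX - x| \<le> E|X - x| \<le> sqrt (E|X - x|\<^sup>2)\<close> and \<open>sqrt (n + |x|\<^sup>2) \<le> sqrt n + |x|\<close>.\<close>

lemma (in prob_space) expectation_mult_antimono_le:
  fixes T :: "'a \<Rightarrow> real" and \<phi> :: "real \<Rightarrow> real"
  assumes \<phi>: "antimono \<phi>"
    and T: "integrable M T" and \<phi>T: "integrable M (\<lambda>\<omega>. \<phi> (T \<omega>))"
    and T\<phi>T: "integrable M (\<lambda>\<omega>. T \<omega> * \<phi> (T \<omega>))"
  shows "expectation (\<lambda>\<omega>. T \<omega> * \<phi> (T \<omega>)) \<le> expectation T * expectation (\<lambda>\<omega>. \<phi> (T \<omega>))"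
proof -
  define m where "m = expectation T"
  have "0 \<le> (T \<omega> - m) * (\<phi> m - \<phi> (T \<omega>))" for \<omega>
    using \<phi> by (cases "T \<omega> \<le> m") (auto simp: antimonoD mult_nonpos_nonpos)
  then have "0 \<le> expectation (\<lambda>\<omega>. (T \<omega> - m) * (\<phi> m - \<phi> (T \<omega>)))"
    by (simp add: integral_nonneg)
  also have "expectation (\<lambda>\<omega>. (T \<omega> - m) * (\<phi> m - \<phi> (T \<omega>)))
      = m * expectation (\<lambda>\<omega>. \<phi> (T \<omega>)) - expectation (\<lambda>\<omega>. T \<omega> * \<phi> (T \<omega>))"
    using T \<phi>T T\<phi>T by (simp add: algebra_simps prob_space m_def)
  finally show ?thesis by (simp add: m_def)
qed

lemma (in prob_space) norm_expectation_diff_le_sqrt: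
  fixes X :: "'a \<Rightarrow> 'b::{banach, second_countable_topology}"
  assumes [measurable]: "X \<in> borel_measurable M"
    and sq: "integrable M (\<lambda>\<omega>. (norm (X \<omega> - x))\<^sup>2)"
  shows "norm (expectation X - x) \<le> sqrt (expectation (\<lambda>\<omega>. (norm (X \<omega> - x))\<^sup>2))"
proof -
  have norm_integrable: "integrable M (\<lambda>\<omega>. norm (X \<omega> - x))"
    by (rule square_integrable_imp_integrable) (use sq in auto)
  have "integrable M X"
    by (rule Bochner_Integration.integrable_bound[where f="\<lambda>\<omega>. norm (X \<omega> - x) + norm x"])
       (use norm_integrable in \<open>auto simp: norm_triangle_sub add.commute\<close>)
  then have "norm (expectation X - x) = norm (expectation (\<lambda>\<omega>. X \<omega> - x))"
    by (simp add: prob_space)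
  also have "\<dots> \<le> expectation (\<lambda>\<omega>. norm (X \<omega> - x))"
    by (rule integral_norm_bound)
  also have "\<dots> \<le> sqrt (expectation (\<lambda>\<omega>. (norm (X \<omega> - x))\<^sup>2))"
    using variance_positive[of "\<lambda>\<omega>. norm (X \<omega> - x)"] variance_eq[OF norm_integrable] sq
    by (simp add: real_le_rsqrt)
  finally show ?thesis .
qed

lemma tilted_expectation_le:
  fixes f t :: "'a \<Rightarrow> real" and \<phi> :: "real \<Rightarrow> real" and X :: "'b \<Rightarrow> 'a"
  assumes M: "prob_space M" and N: "prob_space (density L f)"
    and f[measurable]: "f \<in> borel_measurable L" and f_nonneg: "\<And>y. 0 \<le> f y"
    and t[measurable]: "t \<in> borel_measurable L" and ft: "integrable L (\<lambda>y. f y * t y)"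
    and \<phi>: "antimono \<phi>" and \<phi>_nonneg: "\<And>y. 0 \<le> \<phi> (t y)" and \<phi>_bounded: "\<And>y. \<phi> (t y) \<le> B"
    and c: "0 < c"
    and X: "distributed M L X (\<lambda>y. ennreal (c * (f y * \<phi> (t y))))"
  shows "integrable M (\<lambda>\<omega>. t (X \<omega>))" and "(\<integral>\<omega>. t (X \<omega>) \<partial>M) \<le> (\<integral>y. f y * t y \<partial>L)"
proof -
  interpret M: prob_space M by (rule M)
  interpret N: prob_space "density L f" by (rule N)
  have "(\<lambda>s. - \<phi> s) \<in> borel_measurable borel"
    using \<phi> by (intro borel_measurable_mono) (simp add: mono_def antimono_def)
  then have [measurable]: "\<phi> \<in> borel_measurable borel"
    by simp
  have integral_N: "N.expectation h = (\<integral>y. f y * h y \<partial>L)" if [measurable]: "h \<in> borel_measurable L" for h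
    by (simp add: integral_density f_nonneg)
  have integrable_N: "integrable (density L f) h \<longleftrightarrow> integrable L (\<lambda>y. f y * h y)"
    if [measurable]: "h \<in> borel_measurable L" for h
    by (simp add: integrable_density f_nonneg)
  have T: "integrable (density L f) t"
    using ft by (simp add: integrable_N)
  have W: "integrable (density L f) (\<lambda>y. \<phi> (t y))"
    by (rule N.integrable_const_bound[where B=B]) (auto simp: \<phi>_nonneg \<phi>_bounded)
  have TW: "integrable (density L f) (\<lambda>y. t y * \<phi> (t y))"
    by (rule Bochner_Integration.integrable_bound[where f="\<lambda>y. B * t y"])
       (use T in \<open>auto simp: abs_mult \<phi>_nonneg mult.commute[of "\<bar>B\<bar>"]
                      intro!: mult_left_mono order_trans[OF \<phi>_bounded]\<close>)
  have g_nonneg: "0 \<le> c * (f y * \<phi> (t y))" for y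
    using c f_nonneg \<phi>_nonneg by simp
  have normalization: "c * N.expectation (\<lambda>y. \<phi> (t y)) = 1"
    using distributed_integral[OF X, of "\<lambda>_. 1"] g_nonneg
    by (simp add: integral_N M.prob_space mult_ac)
  have "(\<integral>\<omega>. t (X \<omega>) \<partial>M) = c * N.expectation (\<lambda>y. t y * \<phi> (t y))"
    using distributed_integral[OF X, of t] g_nonneg
    by (simp add: integral_N mult_ac)
  also have "\<dots> \<le> c * (N.expectation t * N.expectation (\<lambda>y. \<phi> (t y)))"
    using N.expectation_mult_antimono_le[OF \<phi> T W TW] c by simp
  also have "\<dots> = N.expectation t"
    using normalization by (simp add: mult_ac)
  also have "\<dots> = (\<integral>y. f y * t y \<partial>L)"
    by (simp add: integral_N)
  finally show "(\<integral>\<omega>. t (X \<omega>) \<partial>M) \<le> (\<integral>y. f y * t y \<partial>L)" .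
  show "integrable M (\<lambda>\<omega>. t (X \<omega>))"
    using distributed_integrable[OF X, of t] g_nonneg TW
    by (simp add: integrable_N mult_ac)
qed

lemma isotropic_integral_norm_sq:
  fixes f :: "'a::euclidean_space \<Rightarrow> real"
  assumes "isotropic f"
  shows "(\<integral>y. f y * (norm y)\<^sup>2 \<partial>lborel) = real DIM('a)"
proof -
  from assms have [measurable]: "f \<in> borel_measurable lborel" and f_nonneg: "\<And>y. 0 \<le> f y"
    and second: "integrable lborel (\<lambda>y. f y * (norm y)\<^sup>2)"
    and variance: "\<And>i. i \<in> Basis \<Longrightarrow> (\<integral>y. f y * ((y \<bullet> i) * (y \<bullet> i)) \<partial>lborel) = 1"
    by (auto simp: isotropic_def)
  have "(y \<bullet> i) * (y \<bullet> i) \<le> (norm y)\<^sup>2" if "i \<in> Basis" for i and y :: 'a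
    using power_mono[OF Basis_le_norm[OF that, of y], of 2] by (simp add: power2_eq_square)
  then have coordinate: "integrable lborel (\<lambda>y. f y * ((y \<bullet> i) * (y \<bullet> i)))" if "i \<in> Basis" for i
    by (intro Bochner_Integration.integrable_bound[OF second])
       (auto intro!: mult_left_mono simp: that abs_mult f_nonneg)
  have "(\<integral>y. f y * (norm y)\<^sup>2 \<partial>lborel) = (\<integral>y. (\<Sum>i\<in>Basis. f y * ((y \<bullet> i) * (y \<bullet> i))) \<partial>lborel)"
    by (simp add: power2_norm_eq_inner euclidean_inner[of y y for y] sum_distrib_left)
  also have "\<dots> = (\<Sum>i\<in>Basis. (\<integral>y. f y * ((y \<bullet> i) * (y \<bullet> i)) \<partial>lborel))"
    using coordinate by (simp add: Bochner_Integration.integral_sum)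
  also have "\<dots> = real DIM('a)"
    by (simp add: variance)
  finally show ?thesis .
qed

lemma isotropic_second_moment:
  fixes f :: "'a::euclidean_space \<Rightarrow> real"
  assumes iso: "isotropic f"
  shows "integrable lborel (\<lambda>y. f y * (norm (y - x))\<^sup>2)"
    and "(\<integral>y. f y * (norm (y - x))\<^sup>2 \<partial>lborel) = real DIM('a) + (norm x)\<^sup>2"
proof -
  from iso have "integrable lborel f" "(\<integral>y. f y \<partial>lborel) = 1"
    and mean: "integrable lborel (\<lambda>y. f y *\<^sub>R y)" "(\<integral>y. f y *\<^sub>R y \<partial>lborel) = 0"
    and "integrable lborel (\<lambda>y. f y * (norm y)\<^sup>2)"
    by (auto simp: isotropic_def)
  moreover have "integrable lborel (\<lambda>y. x \<bullet> (f y *\<^sub>R y))"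
    by (rule integrable_inner_right[OF mean(1)])
  moreover have "(\<integral>y. x \<bullet> (f y *\<^sub>R y) \<partial>lborel) = 0"
    using integral_inner_right[OF mean(1), of x] by (simp only: mean(2) inner_zero_right)
  moreover have "f y * (norm (y - x))\<^sup>2 = f y * (norm y)\<^sup>2 - 2 * (x \<bullet> (f y *\<^sub>R y)) + (norm x)\<^sup>2 * f y" for y
    by (simp add: power2_norm_eq_inner inner_commute algebra_simps)
  ultimately show "integrable lborel (\<lambda>y. f y * (norm (y - x))\<^sup>2)"
    and "(\<integral>y. f y * (norm (y - x))\<^sup>2 \<partial>lborel) = real DIM('a) + (norm x)\<^sup>2"
    by (simp_all add: isotropic_integral_norm_sq[OF iso])
qed

lemma prob_space_density_isotropic:
  assumes "isotropic f"
  shows "prob_space (density lborel f)"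
  using assms by (intro prob_spaceI) (simp add: emeasure_density nn_integral_eq_integral isotropic_def)

theorem corollary2p6:
  fixes f :: "'a::euclidean_space \<Rightarrow> real"
    and x :: 'a and v :: real and c :: real
    and M :: "'b measure" and X :: "'b \<Rightarrow> 'a"
  assumes iso: "isotropic f"
    and v: "v > 0"
    and P: "prob_space M"
    and c: "c > 0"
    and dist: "distributed M lborel X
                 (\<lambda>y. ennreal (c * (f y * exp (- ((norm (x - y))\<^sup>2) / (2 * v)))))"
  shows "prob_space.expectation M (\<lambda>\<omega>. (norm (X \<omega> - x))\<^sup>2) \<le> real DIM('a) + (norm x)\<^sup>2
         \<and> norm (prob_space.expectation M X - x) \<le> sqrt (real DIM('a)) + norm x"
proof -
  interpret prob_space M by (rule P)
  define t where "t y = (norm (y - x))\<^sup>2" for y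
  define \<phi> where "\<phi> s = exp (- s / (2 * v))" for s
  from iso have f_measurable: "f \<in> borel_measurable lborel" and f_nonneg: "\<And>y. 0 \<le> f y"
    by (simp_all add: isotropic_def)
  have t_measurable: "t \<in> borel_measurable lborel"
    unfolding t_def by measurable
  have ft: "integrable lborel (\<lambda>y. f y * t y)"
    using isotropic_second_moment(1)[OF iso] by (simp add: t_def)
  have \<phi>: "antimono \<phi>"
    using v by (auto simp: \<phi>_def antimono_def divide_right_mono)
  have \<phi>_bounds: "0 \<le> \<phi> (t y)" "\<phi> (t y) \<le> 1" for y
    using v by (simp_all add: \<phi>_def t_def)
  have "distributed M lborel X (\<lambda>y. ennreal (c * (f y * \<phi> (t y))))"
    using dist by (simp add: \<phi>_def t_def norm_minus_commute)
  note tilted = tilted_expectation_le[OF P prob_space_density_isotropic[OF iso] f_measurable f_nonneg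
      t_measurable ft \<phi> \<phi>_bounds c this]
  from tilted have square_integrable: "integrable M (\<lambda>\<omega>. (norm (X \<omega> - x))\<^sup>2)"
    and second_moment: "expectation (\<lambda>\<omega>. (norm (X \<omega> - x))\<^sup>2) \<le> real DIM('a) + (norm x)\<^sup>2"
    by (simp_all add: t_def isotropic_second_moment(2)[OF iso])
  have "X \<in> borel_measurable M"
    using distributed_measurable[OF dist] by simp
  then have "norm (expectation X - x) \<le> sqrt (expectation (\<lambda>\<omega>. (norm (X \<omega> - x))\<^sup>2))"
    using square_integrable by (rule norm_expectation_diff_le_sqrt)
  also have "\<dots> \<le> sqrt (real DIM('a) + (norm x)\<^sup>2)"
    using second_moment by simp
  also have "\<dots> \<le> sqrt (real DIM('a)) + norm x"
    using sqrt_add_le_add_sqrt[of "real DIM('a)" "(norm x)\<^sup>2"] by simp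
  finally show ?thesis
    using second_moment by simp
qed

end
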